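(* There exist a universal constant $c_0>0$ and a universal nonincreasing positive function $R:[0,\infty)\to(0,\infty)$ such that for all bounded measurable functions $f,g:[0,1]\to\mathbb R$, $$\|\mathbb P^n_f-\mathbb P^n_g\|_{TV}\le c_0\sqrt n\,e^{c_0(\|f\|_\infty+\|g\|_\infty)}\|f-g\|_\infty$$ and $$1-\tfrac12\|\mathbb P^n_f-\mathbb P^n_g\|_{TV}\ge R\big(n\,e^{3\|f\|_\infty+3\|g\|_\infty}\|f-g\|_\infty^2\big).$$
   Context: For $n\ge1$ and a bounded measurable $f$ on $[0,1]$, $\mathbb P^n_f$ is the law of $(S_{i/n})_{0\le i\le n}$ where $S_t=S_0+\int_0^t\sigma_u\,dB_u$, $B$ a standard Brownian motion, $S_0$ deterministic, $\sigma_t^2=\exp(f(t))$. For a signed measure $\mu$, $\|\mu\|_{TV}=\sup_{\|h\|_\infty\le1}|\int h\,d\mu|$. *)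

theory Defs
  imports "HOL-Probability.Probability"
begin

definition sup_norm :: "(real \<Rightarrow> real) \<Rightarrow> real" where
  "sup_norm f = (SUP t\<in>{0..1}. \<bar>f t\<bar>)"

text \<open>Variance of the i-th increment S_(i/n) - S_((i-1)/n): integral of sigma^2 = exp f.\<close>
definition incr_var :: "(real \<Rightarrow> real) \<Rightarrow> nat \<Rightarrow> nat \<Rightarrow> real" where
  "incr_var f n i = (LBINT t:{real (i - 1) / real n .. real i / real n}. exp (f t))"

text \<open>Law P^n_f of (S_(i/n)), i = 0..n, on functions {0..n} -> real (extensional),
  S_t = S0 + int_0^t sigma dB with deterministic sigma^2 = exp f: the increments are
  independent centred Gaussians with variances incr_var f n i.\<close>
definition obs_law :: "(real \<Rightarrow> real) \<Rightarrow> real \<Rightarrow> nat \<Rightarrow> (nat \<Rightarrow> real) measure" where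
  "obs_law f S0 n =
     distr (PiM {1..n} (\<lambda>i. density lborel (normal_density 0 (sqrt (incr_var f n i)))))
           (PiM {0..n} (\<lambda>_. borel))
           (\<lambda>x. \<lambda>i\<in>{0..n}. S0 + (\<Sum>j\<in>{1..i}. x j))"

definition tv_norm :: "'a measure \<Rightarrow> 'a measure \<Rightarrow> real" where
  "tv_norm M N = (SUP h\<in>{h. h \<in> borel_measurable M \<and> (\<forall>x\<in>space M. \<bar>h x\<bar> \<le> 1)}.
                    \<bar>(\<integral>x. h x \<partial>M) - (\<integral>x. h x \<partial>N)\<bar>)"

end

theory Submission
  imports Defs
begin

(* Both laws are images, under the same partial-sum map, of products of centred Gaussians
  whose variances v\<^sub>i, w\<^sub>i are the integrals of exp f and exp g over [(i-1)/n, i/n], so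
  that \<bar>ln (w\<^sub>i / v\<^sub>i)\<bar> \<le> \<delta> = sup |f - g|. The Hellinger affinity
  \<rho> = \<integral> sqrt (p q) is multiplicative over products, and for a single pair of Gaussians
  \<rho>\<^sup>2 = 2 sqrt (v w) / (v + w) = 1 / cosh (ln (w / v) / 2) \<ge> exp (- \<delta>\<^sup>2 / 4).
  Le Cam's inequality |P - Q|\<^sub>T\<^sub>V \<le> 2 sqrt (1 - \<rho>\<^sup>2) then yields both bounds,
  with c\<^sub>0 = 1 and R x = exp (- x / 4) / 2. *)


lemma abs_diff_le_AM_GM:
  fixes a b t :: real
  assumes "0 \<le> a" "0 \<le> b" "0 < t"
  shows "\<bar>a - b\<bar> \<le> t * (a + b - 2 * sqrt (a * b)) / 2 + (a + b + 2 * sqrt (a * b)) / (2 * t)"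
proof -
  define x y where "x = sqrt a" and "y = sqrt b"
  have "x \<ge> 0" "y \<ge> 0" "a = x\<^sup>2" "b = y\<^sup>2" "sqrt (a * b) = x * y"
    using assms by (auto simp: x_def y_def real_sqrt_mult)
  define u v where "u = t * \<bar>x - y\<bar>" and "v = x + y"
  have "a - b = (x - y) * v"
    using \<open>a = x\<^sup>2\<close> \<open>b = y\<^sup>2\<close> by (simp add: v_def power2_eq_square algebra_simps)
  then have "t * \<bar>a - b\<bar> = u * v"
    using \<open>x \<ge> 0\<close> \<open>y \<ge> 0\<close> by (simp add: u_def v_def abs_mult)
  moreover have "u * v \<le> (u\<^sup>2 + v\<^sup>2) / 2"
    using sum_squares_bound[of u v] by simp
  moreover have "u\<^sup>2 = t\<^sup>2 * (a + b - 2 * sqrt (a * b))" "v\<^sup>2 = a + b + 2 * sqrt (a * b)"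
    using \<open>a = x\<^sup>2\<close> \<open>b = y\<^sup>2\<close> \<open>sqrt (a * b) = x * y\<close>
    by (simp_all add: u_def v_def power_mult_distrib power2_eq_square algebra_simps)
  ultimately have "t * \<bar>a - b\<bar> \<le> (t\<^sup>2 * (a + b - 2 * sqrt (a * b)) + (a + b + 2 * sqrt (a * b))) / 2"
    by simp
  also have "\<dots> = t * (t * (a + b - 2 * sqrt (a * b)) / 2 + (a + b + 2 * sqrt (a * b)) / (2 * t))"
    using assms(3) by (simp add: power2_eq_square field_simps)
  finally show ?thesis
    using assms(3) by (rule mult_left_le_imp_le)
qed

lemma le_2_sqrt_mult_if_forall_pos:
  fixes X a b :: real
  assumes "0 \<le> a" "0 \<le> b" and bound: "\<And>t. 0 < t \<Longrightarrow> X \<le> t * a + b / t"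
  shows "X \<le> 2 * sqrt (a * b)"
proof (cases "a = 0 \<or> b = 0")
  case True
  have "X \<le> 0"
  proof (rule ccontr)
    assume "\<not> X \<le> 0"
    define t where "t = (if a = 0 then 2 * (b + 1) / X else X / (2 * (a + 1)))"
    have "0 < t" using \<open>\<not> X \<le> 0\<close> assms by (simp add: t_def)
    moreover have "t * a + b / t < X"
    proof (cases "a = 0")
      case True
      have "0 < X * b + X * 2" using \<open>\<not> X \<le> 0\<close> assms(2) by (simp add: add_nonneg_pos)
      with True \<open>\<not> X \<le> 0\<close> assms(2) show ?thesis by (simp add: t_def field_simps)
    next
      case False
      have "0 < X * a + X * 2" using \<open>\<not> X \<le> 0\<close> assms(1) by (simp add: add_nonneg_pos)
      with False \<open>a = 0 \<or> b = 0\<close> \<open>\<not> X \<le> 0\<close> assms(1) show ?thesis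
        by (simp add: t_def field_simps)
    qed
    ultimately show False using bound[of t] by linarith
  qed
  with True show ?thesis by auto
next
  case False
  define u w where "u = sqrt a" and "w = sqrt b"
  have "0 < u" "0 < w" using assms False by (simp_all add: u_def w_def)
  then have t: "0 < w / u" by simp
  have ab: "a = u * u" "b = w * w" using assms by (simp_all add: u_def w_def)
  have "w / u * (u * u) = u * w" "w * w / (w / u) = u * w"
    using \<open>0 < u\<close> \<open>0 < w\<close> by simp_all
  then have "w / u * a + b / (w / u) = 2 * (u * w)"
    unfolding ab by simp
  also have "u * w = sqrt (a * b)" by (simp add: u_def w_def real_sqrt_mult)
  finally show ?thesis using bound[OF t] by linarith
qed

lemma real_sqrt_prod: "sqrt (\<Prod>i\<in>I. f i) = (\<Prod>i\<in>I. sqrt (f i))"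
  by (induction I rule: infinite_finite_induct) (simp_all add: real_sqrt_mult)

lemma cosh_le_exp_square: "cosh x \<le> exp (x\<^sup>2)" for x :: real
proof -
  have "cosh y \<le> exp (y\<^sup>2)" if "0 \<le> y" for y :: real
  proof (cases "y \<le> 1")
    case True
    have "exp y \<le> 1 + y + y\<^sup>2"
      using exp_bound[of y] that True by simp
    moreover have "exp (- y) \<le> 1 - y + y\<^sup>2"
    proof -
      have "1 \<le> (1 + y) * (1 - y + y\<^sup>2)"
        using that by (simp add: algebra_simps power2_eq_square power3_eq_cube)
      then have "inverse (1 + y) \<le> 1 - y + y\<^sup>2"
        using that by (simp add: field_simps)
      moreover have "exp (- y) \<le> inverse (1 + y)"
        using that exp_ge_add_one_self[of y] by (simp add: exp_minus le_imp_inverse_le)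
      ultimately show ?thesis by linarith
    qed
    ultimately have "cosh y \<le> 1 + y\<^sup>2"
      by (simp add: cosh_field_def)
    also have "\<dots> \<le> exp (y\<^sup>2)"
      by (rule exp_ge_add_one_self)
    finally show ?thesis .
  next
    case False
    have "exp (- y) \<le> exp y" using that by simp
    then have "cosh y \<le> exp y"
      by (simp add: cosh_field_def)
    also have "\<dots> \<le> exp (y\<^sup>2)"
      using False by (simp add: power2_eq_square)
    finally show ?thesis .
  qed
  from this[of "\<bar>x\<bar>"] show ?thesis
    by (cases "0 \<le> x") simp_all
qed

lemma two_sqrt_mult_div_add_eq_inverse_cosh:
  fixes v w :: real
  assumes v: "0 < v" and w: "0 < w"
  shows "2 * sqrt (v * w) / (v + w) = inverse (cosh (ln (w / v) / 2))"
proof -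
  define e where "e = exp (ln (w / v) / 2)"
  have e: "0 < e" and w_e: "w = v * e\<^sup>2" and cosh_e: "cosh (ln (w / v) / 2) = (e + 1 / e) / 2"
    using v w by (simp_all add: e_def cosh_field_def exp_minus inverse_eq_divide flip: exp_double)
  have "2 * sqrt (v * w) / (v + w) = 2 * (v * e) / (v * (1 + e\<^sup>2))"
    using v e by (simp add: w_e real_sqrt_mult algebra_simps)
  also have "\<dots> = 2 * e / (1 + e\<^sup>2)"
    using v by simp
  also have "\<dots> = inverse (cosh (ln (w / v) / 2))"
    using e add_pos_nonneg[OF zero_less_one zero_le_power2[of e]]
    by (simp add: cosh_e field_simps power2_eq_square)
  finally show ?thesis .
qed

lemma two_sqrt_mult_div_add_ge_exp:
  fixes v w \<delta> :: real
  assumes v: "0 < v" and w: "0 < w" and "w \<le> exp \<delta> * v" and "v \<le> exp \<delta> * w"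
  shows "exp (- (\<delta>\<^sup>2 / 4)) \<le> 2 * sqrt (v * w) / (v + w)"
proof -
  have "ln (w / v) \<le> ln (exp \<delta>)"
    using assms by (subst ln_le_cancel_iff) (simp_all add: field_simps)
  moreover have "exp (- \<delta>) \<le> w / v"
    using assms by (simp add: exp_minus field_simps)
  then have "- \<delta> \<le> ln (w / v)"
    using v w by (simp add: ln_ge_iff)
  ultimately have "(ln (w / v) / 2)\<^sup>2 \<le> \<delta>\<^sup>2 / 4"
    by (simp add: power_divide abs_le_square_iff[symmetric] abs_le_iff)
  then have "cosh (ln (w / v) / 2) \<le> exp (\<delta>\<^sup>2 / 4)"
    using cosh_le_exp_square[of "ln (w / v) / 2"] by (meson exp_le_cancel_iff order_trans)
  then have "inverse (exp (\<delta>\<^sup>2 / 4)) \<le> inverse (cosh (ln (w / v) / 2))"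
    by (rule le_imp_inverse_le) (simp add: cosh_real_pos)
  then show ?thesis
    by (simp add: two_sqrt_mult_div_add_eq_inverse_cosh[OF v w] exp_minus)
qed

lemma sqrt_one_minus_le: "0 \<le> a \<Longrightarrow> a \<le> 1 \<Longrightarrow> sqrt (1 - a) \<le> 1 - a / 2"
  by (rule real_le_lsqrt) (simp_all add: power2_eq_square algebra_simps)

section \<open>Probability densities and the Hellinger affinity\<close>

definition prob_density :: "'a measure \<Rightarrow> ('a \<Rightarrow> real) \<Rightarrow> bool" where
  "prob_density M p \<longleftrightarrow> integrable M p \<and> (\<forall>x\<in>space M. 0 \<le> p x) \<and> (\<integral>x. p x \<partial>M) = 1"

lemma
  assumes "prob_density M p"
  shows prob_density_integrable: "integrable M p"
    and prob_density_measurable: "p \<in> borel_measurable M"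
    and prob_density_nonneg: "x \<in> space M \<Longrightarrow> 0 \<le> p x"
    and prob_density_integral: "(\<integral>x. p x \<partial>M) = 1"
  using assms by (auto simp: prob_density_def)

lemma nn_integral_prob_density:
  assumes "prob_density M p"
  shows "(\<integral>\<^sup>+x. ennreal (p x) \<partial>M) = 1"
  using assms by (subst nn_integral_eq_integral) (auto simp: prob_density_def intro: AE_I2)

lemma prob_space_density_prob_density:
  assumes "prob_density M p"
  shows "prob_space (density M p)"
proof
  have "emeasure (density M p) (space M) = (\<integral>\<^sup>+x. ennreal (p x) \<partial>M)"
    using assms by (auto simp: prob_density_def emeasure_density intro!: nn_integral_cong)
  then show "emeasure (density M p) (space (density M p)) = 1"
    using nn_integral_prob_density[OF assms] by simp
qed

definition hellinger_affinity :: "'a measure \<Rightarrow> ('a \<Rightarrow> real) \<Rightarrow> ('a \<Rightarrow> real) \<Rightarrow> real" where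
  "hellinger_affinity M p q = (\<integral>x. sqrt (p x * q x) \<partial>M)"

lemma sqrt_mult_prob_density_le:
  assumes "prob_density M p" "prob_density M q" "x \<in> space M"
  shows "sqrt (p x * q x) \<le> (p x + q x) / 2"
  using assms by (intro arith_geo_mean_sqrt) (auto intro: prob_density_nonneg)

lemma integrable_sqrt_mult_prob_density:
  assumes "prob_density M p" "prob_density M q"
  shows "integrable M (\<lambda>x. sqrt (p x * q x))"
proof (rule Bochner_Integration.integrable_bound)
  show "integrable M (\<lambda>x. (p x + q x) / 2)"
    using assms by (simp add: prob_density_integrable)
  show "AE x in M. norm (sqrt (p x * q x)) \<le> norm ((p x + q x) / 2)"
    using assms sqrt_mult_prob_density_le[OF assms]
    by (intro AE_I2) (simp add: prob_density_nonneg)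
  note [measurable] = prob_density_measurable[OF assms(1)] prob_density_measurable[OF assms(2)]
  show "(\<lambda>x. sqrt (p x * q x)) \<in> borel_measurable M"
    by measurable
qed

lemma hellinger_affinity_nonneg:
  assumes "prob_density M p" "prob_density M q"
  shows "0 \<le> hellinger_affinity M p q"
  unfolding hellinger_affinity_def using assms
  by (intro integral_nonneg_AE AE_I2) (simp add: prob_density_nonneg)

lemma hellinger_affinity_le_1:
  assumes "prob_density M p" "prob_density M q"
  shows "hellinger_affinity M p q \<le> 1"
proof -
  have "hellinger_affinity M p q \<le> (\<integral>x. (p x + q x) / 2 \<partial>M)"
    unfolding hellinger_affinity_def using assms sqrt_mult_prob_density_le[OF assms]
    by (intro integral_mono integrable_sqrt_mult_prob_density) (simp_all add: prob_density_integrable)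
  also have "\<dots> = 1"
    using assms by (simp add: prob_density_integrable prob_density_integral)
  finally show ?thesis .
qed

lemma integral_abs_diff_le_AM_GM:
  assumes p: "prob_density M p" and q: "prob_density M q" and t: "0 < t"
  shows "(\<integral>x. \<bar>p x - q x\<bar> \<partial>M) \<le> t * (1 - hellinger_affinity M p q) + (1 + hellinger_affinity M p q) / t"
proof -
  define E where "E x = t * (p x + q x - 2 * sqrt (p x * q x)) / 2
                         + (p x + q x + 2 * sqrt (p x * q x)) / (2 * t)" for x
  note ip = prob_density_integrable[OF p] and iq = prob_density_integrable[OF q]
    and ir = integrable_sqrt_mult_prob_density[OF p q]
  have "(\<integral>x. \<bar>p x - q x\<bar> \<partial>M) \<le> (\<integral>x. E x \<partial>M)"
    unfolding E_def using ip iq ir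
    by (intro integral_mono abs_diff_le_AM_GM prob_density_nonneg[OF p] prob_density_nonneg[OF q] t)
      simp_all
  also have "\<dots> = t * (1 + 1 - 2 * hellinger_affinity M p q) / 2
                   + (1 + 1 + 2 * hellinger_affinity M p q) / (2 * t)"
    using ip iq ir unfolding E_def hellinger_affinity_def
    by (simp add: prob_density_integral[OF p] prob_density_integral[OF q])
  also have "\<dots> = t * (1 - hellinger_affinity M p q) + (1 + hellinger_affinity M p q) / t"
    using t by (simp add: field_simps)
  finally show ?thesis .
qed

lemma integral_abs_diff_le_hellinger:
  assumes p: "prob_density M p" and q: "prob_density M q"
  shows "(\<integral>x. \<bar>p x - q x\<bar> \<partial>M) \<le> 2 * sqrt (1 - (hellinger_affinity M p q)\<^sup>2)"
proof -
  have "(1 - hellinger_affinity M p q) * (1 + hellinger_affinity M p q) = 1 - (hellinger_affinity M p q)\<^sup>2"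
    by (simp add: power2_eq_square algebra_simps)
  moreover have "(\<integral>x. \<bar>p x - q x\<bar> \<partial>M)
      \<le> 2 * sqrt ((1 - hellinger_affinity M p q) * (1 + hellinger_affinity M p q))"
    using hellinger_affinity_nonneg[OF p q] hellinger_affinity_le_1[OF p q]
    by (intro le_2_sqrt_mult_if_forall_pos integral_abs_diff_le_AM_GM[OF p q]) simp_all
  ultimately show ?thesis
    by simp
qed

lemma abs_integral_density_diff_le:
  assumes p: "prob_density M p" and q: "prob_density M q"
    and [measurable]: "h \<in> borel_measurable M" and h: "\<And>x. x \<in> space M \<Longrightarrow> \<bar>h x\<bar> \<le> 1"
  shows "\<bar>(\<integral>x. h x \<partial>density M p) - (\<integral>x. h x \<partial>density M q)\<bar> \<le> (\<integral>x. \<bar>p x - q x\<bar> \<partial>M)"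
proof -
  note [measurable] = prob_density_measurable[OF p] prob_density_measurable[OF q]
  have ph: "integrable M (\<lambda>x. p x * h x)"
  proof (rule Bochner_Integration.integrable_bound[OF prob_density_integrable[OF p]])
    show "AE x in M. norm (p x * h x) \<le> norm (p x)"
      using prob_density_nonneg[OF p] h by (intro AE_I2) (simp add: abs_mult mult_left_le)
  qed measurable
  have qh: "integrable M (\<lambda>x. q x * h x)"
  proof (rule Bochner_Integration.integrable_bound[OF prob_density_integrable[OF q]])
    show "AE x in M. norm (q x * h x) \<le> norm (q x)"
      using prob_density_nonneg[OF q] h by (intro AE_I2) (simp add: abs_mult mult_left_le)
  qed measurable
  have "(\<integral>x. h x \<partial>density M p) - (\<integral>x. h x \<partial>density M q) = (\<integral>x. (p x - q x) * h x \<partial>M)"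
    using prob_density_nonneg[OF p] prob_density_nonneg[OF q] ph qh
    by (simp add: integral_density AE_I2 left_diff_distrib)
  also have "\<bar>\<dots>\<bar> \<le> (\<integral>x. \<bar>(p x - q x) * h x\<bar> \<partial>M)"
    using integral_norm_bound[of M "\<lambda>x. (p x - q x) * h x"] by simp
  also have "\<dots> \<le> (\<integral>x. \<bar>p x - q x\<bar> \<partial>M)"
  proof (rule integral_mono)
    show "integrable M (\<lambda>x. \<bar>(p x - q x) * h x\<bar>)"
      using ph qh by (simp add: left_diff_distrib)
    show "integrable M (\<lambda>x. \<bar>p x - q x\<bar>)"
      using prob_density_integrable[OF p] prob_density_integrable[OF q] by simp
    show "\<bar>(p x - q x) * h x\<bar> \<le> \<bar>p x - q x\<bar>" if "x \<in> space M" for x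
      using h[OF that] by (simp add: abs_mult mult_left_le)
  qed
  finally show ?thesis .
qed

lemma tv_norm_distr_density_le_hellinger:
  assumes p: "prob_density M p" and q: "prob_density M q" and [measurable]: "T \<in> M \<rightarrow>\<^sub>M N"
  shows "tv_norm (distr (density M p) N T) (distr (density M q) N T)
           \<le> 2 * sqrt (1 - (hellinger_affinity M p q)\<^sup>2)"
  unfolding tv_norm_def
proof (rule cSUP_least)
  show "{h. h \<in> borel_measurable (distr (density M p) N T) \<and>
            (\<forall>x\<in>space (distr (density M p) N T). \<bar>h x :: real\<bar> \<le> 1)} \<noteq> {}"
    by (simp, intro exI[of _ "\<lambda>_. 0 :: real"]) simp
next
  fix h :: "_ \<Rightarrow> real"
  assume "h \<in> {h. h \<in> borel_measurable (distr (density M p) N T) \<and>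
                  (\<forall>x\<in>space (distr (density M p) N T). \<bar>h x\<bar> \<le> 1)}"
  then have [measurable]: "h \<in> borel_measurable N" and h: "\<And>y. y \<in> space N \<Longrightarrow> \<bar>h y\<bar> \<le> 1"
    by auto
  have "\<And>x. x \<in> space M \<Longrightarrow> \<bar>h (T x)\<bar> \<le> 1"
    using h measurable_space[OF assms(3)] by blast
  then have "\<bar>(\<integral>x. h (T x) \<partial>density M p) - (\<integral>x. h (T x) \<partial>density M q)\<bar> \<le> (\<integral>x. \<bar>p x - q x\<bar> \<partial>M)"
    by (rule abs_integral_density_diff_le[OF p q, rotated]) measurable
  then show "\<bar>(\<integral>y. h y \<partial>distr (density M p) N T) - (\<integral>y. h y \<partial>distr (density M q) N T)\<bar>
               \<le> 2 * sqrt (1 - (hellinger_affinity M p q)\<^sup>2)"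
    using integral_abs_diff_le_hellinger[OF p q] by (simp add: integral_distr)
qed

lemma indicator_PiE_eq_prod:
  assumes "finite I" "x \<in> extensional I"
  shows "indicator (PiE I A) x = (\<Prod>i\<in>I. indicator (A i) (x i) :: 'a :: comm_semiring_1)"
proof (cases "\<forall>i\<in>I. x i \<in> A i")
  case False
  then obtain i where "i \<in> I" "x i \<notin> A i" by blast
  then have "x \<notin> PiE I A" by auto
  moreover have "(\<Prod>i\<in>I. indicator (A i) (x i) :: 'a) = 0"
    using assms(1) \<open>i \<in> I\<close> \<open>x i \<notin> A i\<close> by (intro prod_zero) (auto intro!: bexI[of _ i])
  ultimately show ?thesis by simp
qed (use assms in \<open>auto simp: PiE_def Pi_iff intro!: prod.neutral[symmetric]\<close>)

context product_sigma_finite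
begin

lemma prob_density_PiM_prod:
  assumes I: "finite I" and p: "\<And>i. i \<in> I \<Longrightarrow> prob_density (M i) (p i)"
  shows "prob_density (PiM I M) (\<lambda>x. \<Prod>i\<in>I. p i (x i))"
  unfolding prob_density_def
proof safe
  show "integrable (PiM I M) (\<lambda>x. \<Prod>i\<in>I. p i (x i))"
    using I p by (intro product_integrable_prod) (simp_all add: prob_density_integrable)
  show "0 \<le> (\<Prod>i\<in>I. p i (x i))" if "x \<in> space (PiM I M)" for x
    using that p by (intro prod_nonneg) (auto simp: space_PiM intro: prob_density_nonneg)
  show "(\<integral>x. (\<Prod>i\<in>I. p i (x i)) \<partial>PiM I M) = 1"
    using I p by (simp add: product_integral_prod prob_density_integrable prob_density_integral)
qed

lemma hellinger_affinity_PiM_prod: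
  assumes I: "finite I"
    and p: "\<And>i. i \<in> I \<Longrightarrow> prob_density (M i) (p i)" and q: "\<And>i. i \<in> I \<Longrightarrow> prob_density (M i) (q i)"
  shows "hellinger_affinity (PiM I M) (\<lambda>x. \<Prod>i\<in>I. p i (x i)) (\<lambda>x. \<Prod>i\<in>I. q i (x i))
           = (\<Prod>i\<in>I. hellinger_affinity (M i) (p i) (q i))"
proof -
  have "hellinger_affinity (PiM I M) (\<lambda>x. \<Prod>i\<in>I. p i (x i)) (\<lambda>x. \<Prod>i\<in>I. q i (x i))
        = (\<integral>x. (\<Prod>i\<in>I. sqrt (p i (x i) * q i (x i))) \<partial>PiM I M)"
    unfolding hellinger_affinity_def by (simp add: real_sqrt_prod flip: prod.distrib)
  also have "\<dots> = (\<Prod>i\<in>I. hellinger_affinity (M i) (p i) (q i))"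
    unfolding hellinger_affinity_def using p q
    by (intro product_integral_prod[OF I] integrable_sqrt_mult_prob_density)
  finally show ?thesis .
qed

lemma PiM_density_prod:
  assumes I: "finite I" and p: "\<And>i. prob_density (M i) (p i)"
  shows "PiM I (\<lambda>i. density (M i) (p i)) = density (PiM I M) (\<lambda>x. \<Prod>i\<in>I. p i (x i))"
proof -
  interpret D: product_sigma_finite "\<lambda>i. density (M i) (p i)"
    unfolding product_sigma_finite_def
    using p prob_space_density_prob_density prob_space_imp_sigma_finite by blast
  note [measurable] = prob_density_measurable[OF p]
  have "density (PiM I M) (\<lambda>x. \<Prod>i\<in>I. p i (x i)) = PiM I (\<lambda>i. density (M i) (p i))"
  proof (rule D.PiM_eqI[OF I])
    show "sets (density (PiM I M) (\<lambda>x. \<Prod>i\<in>I. p i (x i))) = sets (PiM I (\<lambda>i. density (M i) (p i)))"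
      by (simp cong: sets_PiM_cong)
    fix A assume A: "\<And>i. i \<in> I \<Longrightarrow> A i \<in> sets (density (M i) (p i))"
    then have [measurable]: "PiE I A \<in> sets (PiM I M)"
      using I by (intro sets_PiM_I_finite) simp_all
    have "emeasure (density (PiM I M) (\<lambda>x. \<Prod>i\<in>I. p i (x i))) (PiE I A)
        = (\<integral>\<^sup>+x. ennreal (\<Prod>i\<in>I. p i (x i)) * indicator (PiE I A) x \<partial>PiM I M)"
      by (rule emeasure_density) measurable
    also have "\<dots> = (\<integral>\<^sup>+x. (\<Prod>i\<in>I. ennreal (p i (x i)) * indicator (A i) (x i)) \<partial>PiM I M)"
    proof (rule nn_integral_cong)
      fix x assume x: "x \<in> space (PiM I M)"
      have "indicator (PiE I A) x = (\<Prod>i\<in>I. indicator (A i) (x i) :: ennreal)"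
        using x I by (intro indicator_PiE_eq_prod) (auto simp: space_PiM PiE_def)
      moreover have "ennreal (\<Prod>i\<in>I. p i (x i)) = (\<Prod>i\<in>I. ennreal (p i (x i)))"
        using x p by (intro prod_ennreal[symmetric]) (auto simp: space_PiM intro: prob_density_nonneg)
      ultimately show "ennreal (\<Prod>i\<in>I. p i (x i)) * indicator (PiE I A) x
          = (\<Prod>i\<in>I. ennreal (p i (x i)) * indicator (A i) (x i))"
        by (simp add: prod.distrib)
    qed
    also have "\<dots> = (\<Prod>i\<in>I. \<integral>\<^sup>+y. ennreal (p i y) * indicator (A i) y \<partial>M i)"
    proof (rule product_nn_integral_prod[OF I])
      fix i assume "i \<in> I"
      then have [measurable]: "A i \<in> sets (M i)" using A by simp
      show "(\<lambda>y. ennreal (p i y) * indicator (A i) y) \<in> borel_measurable (M i)"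
        by measurable
    qed
    also have "\<dots> = (\<Prod>i\<in>I. emeasure (density (M i) (p i)) (A i))"
      using A by (intro prod.cong refl emeasure_density[symmetric]) simp_all
    finally show "emeasure (density (PiM I M) (\<lambda>x. \<Prod>i\<in>I. p i (x i))) (PiE I A)
        = (\<Prod>i\<in>I. emeasure (density (M i) (p i)) (A i))" .
  qed
  then show ?thesis ..
qed

end

lemma product_sigma_finite_lborel: "product_sigma_finite (\<lambda>_. lborel :: real measure)"
  by (simp add: product_sigma_finite_def lborel.sigma_finite_measure_axioms)

section \<open>Centred Gaussians\<close>

lemma prob_density_normal_density: "0 < \<sigma> \<Longrightarrow> prob_density lborel (normal_density \<mu> \<sigma>)"
  by (simp add: prob_density_def)

lemma normal_density_eq: "0 < \<sigma> \<Longrightarrow> normal_density 0 \<sigma> x = exp (- x\<^sup>2 / (2 * \<sigma>\<^sup>2)) / (sqrt (2 * pi) * \<sigma>)"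
  by (simp add: normal_density_def real_sqrt_mult)

lemma sqrt_normal_density_mult:
  fixes \<sigma> \<tau> x :: real
  assumes \<sigma>: "0 < \<sigma>" and \<tau>: "0 < \<tau>"
  defines "r \<equiv> sqrt (2 * \<sigma>\<^sup>2 * \<tau>\<^sup>2 / (\<sigma>\<^sup>2 + \<tau>\<^sup>2))"
  shows "sqrt (normal_density 0 \<sigma> x * normal_density 0 \<tau> x)
           = sqrt (2 * \<sigma> * \<tau> / (\<sigma>\<^sup>2 + \<tau>\<^sup>2)) * normal_density 0 r x"
proof -
  define c where "c = sqrt (2 * \<sigma> * \<tau> / (\<sigma>\<^sup>2 + \<tau>\<^sup>2))"
  have S: "0 < \<sigma>\<^sup>2 + \<tau>\<^sup>2" using \<sigma> \<tau> by (simp add: add_pos_pos)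
  have r: "0 < r" and rr: "r\<^sup>2 = 2 * \<sigma>\<^sup>2 * \<tau>\<^sup>2 / (\<sigma>\<^sup>2 + \<tau>\<^sup>2)"
    using \<sigma> \<tau> S by (simp_all add: r_def)
  have cc: "c\<^sup>2 = 2 * \<sigma> * \<tau> / (\<sigma>\<^sup>2 + \<tau>\<^sup>2)" using \<sigma> \<tau> S by (simp add: c_def)
  have exponent: "- x\<^sup>2 / (2 * \<sigma>\<^sup>2) + - x\<^sup>2 / (2 * \<tau>\<^sup>2) = 2 * (- x\<^sup>2 / (2 * r\<^sup>2))"
    unfolding rr using \<sigma> \<tau> by (simp add: field_simps power2_eq_square)
  have "(sqrt (2 * pi) * r)\<^sup>2 = c\<^sup>2 * (sqrt (2 * pi) * \<sigma> * (sqrt (2 * pi) * \<tau>))"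
    unfolding cc power_mult_distrib rr using S by (simp add: field_simps power2_eq_square)
  then have norm_const: "c\<^sup>2 / (sqrt (2 * pi) * r)\<^sup>2 = 1 / (sqrt (2 * pi) * \<sigma> * (sqrt (2 * pi) * \<tau>))"
    using \<sigma> \<tau> S by (simp add: cc)
  have "(c * normal_density 0 r x)\<^sup>2
      = c\<^sup>2 / (sqrt (2 * pi) * r)\<^sup>2 * exp (2 * (- x\<^sup>2 / (2 * r\<^sup>2)))"
    unfolding normal_density_eq[OF r] exp_double by (simp add: power_divide power_mult_distrib)
  also have "\<dots> = normal_density 0 \<sigma> x * normal_density 0 \<tau> x"
    unfolding norm_const exponent[symmetric] normal_density_eq[OF \<sigma>] normal_density_eq[OF \<tau>] exp_add
    by simp
  finally have "sqrt (normal_density 0 \<sigma> x * normal_density 0 \<tau> x) = \<bar>c * normal_density 0 r x\<bar>"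
    by (metis real_sqrt_abs)
  then show ?thesis
    using \<sigma> \<tau> by (simp add: c_def)
qed

lemma hellinger_affinity_normal_density:
  fixes \<sigma> \<tau> :: real
  assumes "0 < \<sigma>" "0 < \<tau>"
  shows "hellinger_affinity lborel (normal_density 0 \<sigma>) (normal_density 0 \<tau>)
           = sqrt (2 * \<sigma> * \<tau> / (\<sigma>\<^sup>2 + \<tau>\<^sup>2))"
proof -
  define r where "r = sqrt (2 * \<sigma>\<^sup>2 * \<tau>\<^sup>2 / (\<sigma>\<^sup>2 + \<tau>\<^sup>2))"
  have "0 < r" using assms by (simp add: r_def add_pos_pos)
  then show ?thesis
    unfolding hellinger_affinity_def sqrt_normal_density_mult[OF assms] r_def[symmetric]
    by simp
qed

lemma tv_norm_distr_PiM_normal_le: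
  fixes v w :: "'i \<Rightarrow> real"
  assumes I: "finite I" and v: "\<And>i. 0 < v i" and w: "\<And>i. 0 < w i"
    and T: "T \<in> PiM I (\<lambda>_. lborel) \<rightarrow>\<^sub>M N"
  shows "tv_norm (distr (PiM I (\<lambda>i. density lborel (normal_density 0 (sqrt (v i))))) N T)
                 (distr (PiM I (\<lambda>i. density lborel (normal_density 0 (sqrt (w i))))) N T)
           \<le> 2 * sqrt (1 - (\<Prod>i\<in>I. 2 * sqrt (v i * w i) / (v i + w i)))"
proof -
  interpret product_sigma_finite "\<lambda>_::'i. lborel :: real measure"
    by (rule product_sigma_finite_lborel)
  define p q where "p i = normal_density 0 (sqrt (v i))" and "q i = normal_density 0 (sqrt (w i))" for i
  have p: "\<And>i. prob_density lborel (p i)" and q: "\<And>i. prob_density lborel (q i)"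
    using v w by (simp_all add: p_def q_def prob_density_normal_density)
  have law_v: "PiM I (\<lambda>i. density lborel (normal_density 0 (sqrt (v i))))
      = density (PiM I (\<lambda>_. lborel)) (\<lambda>x. \<Prod>i\<in>I. p i (x i))"
    using PiM_density_prod[OF I p] by (simp add: p_def)
  have law_w: "PiM I (\<lambda>i. density lborel (normal_density 0 (sqrt (w i))))
      = density (PiM I (\<lambda>_. lborel)) (\<lambda>x. \<Prod>i\<in>I. q i (x i))"
    using PiM_density_prod[OF I q] by (simp add: q_def)
  have P: "prob_density (PiM I (\<lambda>_. lborel)) (\<lambda>x. \<Prod>i\<in>I. p i (x i))"
    and Q: "prob_density (PiM I (\<lambda>_. lborel)) (\<lambda>x. \<Prod>i\<in>I. q i (x i))"
    by (intro prob_density_PiM_prod I p q)+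
  have "(\<Prod>i\<in>I. 2 * sqrt (v i * w i) / (v i + w i)) = (\<Prod>i\<in>I. (hellinger_affinity lborel (p i) (q i))\<^sup>2)"
    using v w by (intro prod.cong refl)
      (simp add: p_def q_def hellinger_affinity_normal_density real_sqrt_mult less_imp_le)
  also have "\<dots> = (hellinger_affinity (PiM I (\<lambda>_. lborel)) (\<lambda>x. \<Prod>i\<in>I. p i (x i)) (\<lambda>x. \<Prod>i\<in>I. q i (x i)))\<^sup>2"
    by (simp add: hellinger_affinity_PiM_prod[OF I p q] prod_power_distrib)
  finally show ?thesis
    unfolding law_v law_w by (simp only: tv_norm_distr_density_le_hellinger[OF P Q T])
qed

section \<open>The discretely observed model\<close>

lemma abs_le_sup_norm:
  assumes "bounded (f ` {0..1})" "t \<in> {0..1}"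
  shows "\<bar>f t\<bar> \<le> sup_norm f"
proof -
  have "bdd_above ((\<lambda>t. \<bar>f t\<bar>) ` {0..1})"
    using assms(1) by (auto simp: bounded_iff bdd_above_def)
  then show ?thesis
    unfolding sup_norm_def using assms(2) by (rule cSUP_upper2) simp
qed

lemma sup_norm_nonneg: "bounded (f ` {0..1}) \<Longrightarrow> 0 \<le> sup_norm f" for f :: "real \<Rightarrow> real"
  using abs_le_sup_norm[of f 0] by simp

lemma increment_interval_subset:
  assumes "i \<in> {1..n}"
  shows "{real (i - 1) / real n .. real i / real n} \<subseteq> {0..1}"
  using assms by (auto simp: field_simps)

lemma set_integrable_exp_bounded:
  fixes f :: "real \<Rightarrow> real"
  assumes "f \<in> borel_measurable borel" "bounded (f ` {0..1})" "{a..b} \<subseteq> {0..1}"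
  shows "set_integrable lborel {a..b} (\<lambda>t. exp (f t))"
  unfolding set_integrable_def
proof (rule integrableI_bounded_set_indicator[where B = "exp (sup_norm f)"])
  show "AE t in lborel. t \<in> {a..b} \<longrightarrow> norm (exp (f t)) \<le> exp (sup_norm f)"
  proof (rule AE_I2, rule impI)
    fix t assume "t \<in> {a..b}"
    then have "t \<in> {0..1}" using assms(3) by blast
    then show "norm (exp (f t)) \<le> exp (sup_norm f)"
      using abs_le_sup_norm[OF assms(2)] by fastforce
  qed
qed (use assms in \<open>simp_all add: emeasure_lborel_Icc_eq\<close>)

lemma incr_var_ge:
  assumes "f \<in> borel_measurable borel" "bounded (f ` {0..1})" "i \<in> {1..n}"
  shows "exp (- sup_norm f) / real n \<le> incr_var f n i"
proof -
  let ?A = "{real (i - 1) / real n .. real i / real n}"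
  have A: "?A \<subseteq> {0..1}" using increment_interval_subset[OF assms(3)] .
  have "measure lborel ?A = 1 / real n"
    using assms(3) by (auto simp: of_nat_diff diff_divide_distrib)
  then have "exp (- sup_norm f) / real n = (LINT t:?A|lborel. exp (- sup_norm f))"
    by (simp add: set_integral_const emeasure_lborel_Icc_eq)
  also have "\<dots> \<le> (LINT t:?A|lborel. exp (f t))"
  proof (rule set_integral_mono)
    show "set_integrable lborel ?A (\<lambda>t. exp (- sup_norm f))"
      by (simp add: set_integrable_def emeasure_lborel_Icc_eq integrable_real_mult_indicator)
    show "set_integrable lborel ?A (\<lambda>t. exp (f t))"
      using set_integrable_exp_bounded[OF assms(1,2) A] .
    show "exp (- sup_norm f) \<le> exp (f t)" if "t \<in> ?A" for t
    proof -
      have "t \<in> {0..1}" using that A by blast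
      then show ?thesis using abs_le_sup_norm[OF assms(2), of t] by simp
    qed
  qed
  finally show ?thesis
    unfolding incr_var_def .
qed

lemma incr_var_pos:
  assumes "f \<in> borel_measurable borel" "bounded (f ` {0..1})" "i \<in> {1..n}"
  shows "0 < incr_var f n i"
proof -
  have "0 < exp (- sup_norm f) / real n"
    using assms(3) by simp
  then show ?thesis
    using incr_var_ge[OF assms] by linarith
qed

lemma incr_var_le_exp_mult:
  assumes "f \<in> borel_measurable borel" "g \<in> borel_measurable borel"
    and "bounded (f ` {0..1})" "bounded (g ` {0..1})" "i \<in> {1..n}"
    and \<delta>: "\<And>t. t \<in> {0..1} \<Longrightarrow> \<bar>f t - g t\<bar> \<le> \<delta>"
  shows "incr_var g n i \<le> exp \<delta> * incr_var f n i"
proof -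
  let ?A = "{real (i - 1) / real n .. real i / real n}"
  have A: "?A \<subseteq> {0..1}" using increment_interval_subset[OF assms(5)] .
  have "(LINT t:?A|lborel. exp (g t)) \<le> (LINT t:?A|lborel. exp \<delta> * exp (f t))"
  proof (rule set_integral_mono)
    show "set_integrable lborel ?A (\<lambda>t. exp (g t))"
      using set_integrable_exp_bounded[OF assms(2,4) A] .
    show "set_integrable lborel ?A (\<lambda>t. exp \<delta> * exp (f t))"
      using set_integrable_exp_bounded[OF assms(1,3) A] by (rule set_integrable_mult_right)
    show "exp (g t) \<le> exp \<delta> * exp (f t)" if "t \<in> ?A" for t
    proof -
      have "t \<in> {0..1}" using that A by blast
      then show ?thesis using \<delta>[of t] by (simp flip: exp_add)
    qed
  qed
  then show ?thesis
    unfolding incr_var_def by simp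
qed

lemma measurable_partial_sums:
  fixes n :: nat
  shows "(\<lambda>x. \<lambda>i\<in>{0..n}. S0 + (\<Sum>j\<in>{1..i}. x j)) \<in> PiM {1..n} (\<lambda>_. lborel) \<rightarrow>\<^sub>M PiM {0..n} (\<lambda>_. borel)"
proof (rule measurable_restrict)
  fix i assume "i \<in> {0..n}"
  have "(\<lambda>x. x j) \<in> borel_measurable (PiM {1..n} (\<lambda>_. lborel))" if "j \<in> {1..i}" for j
  proof -
    have "j \<in> {1..n}" using that \<open>i \<in> {0..n}\<close> by auto
    from measurable_component_singleton[OF this, of "\<lambda>_. lborel"] show ?thesis by simp
  qed
  then show "(\<lambda>x. S0 + (\<Sum>j\<in>{1..i}. x j)) \<in> borel_measurable (PiM {1..n} (\<lambda>_. lborel))"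
    by (intro borel_measurable_add borel_measurable_sum) simp_all
qed

lemma obs_law_eq_distr_PiM:
  assumes "\<And>i. i \<in> {1..n} \<Longrightarrow> v i = incr_var f n i"
  shows "obs_law f S0 n = distr (PiM {1..n} (\<lambda>i. density lborel (normal_density 0 (sqrt (v i)))))
           (PiM {0..n} (\<lambda>_. borel)) (\<lambda>x. \<lambda>i\<in>{0..n}. S0 + (\<Sum>j\<in>{1..i}. x j))"
proof -
  have "PiM {1..n} (\<lambda>i. density lborel (normal_density 0 (sqrt (incr_var f n i))))
      = PiM {1..n} (\<lambda>i. density lborel (normal_density 0 (sqrt (v i))))"
    using assms by (intro PiM_cong) simp_all
  then show ?thesis
    unfolding obs_law_def by simp
qed

lemma exp_le_prod_incr_var_affinity:
  fixes f g :: "real \<Rightarrow> real"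
  assumes f: "f \<in> borel_measurable borel" "bounded (f ` {0..1})"
    and g: "g \<in> borel_measurable borel" "bounded (g ` {0..1})"
  shows "exp (- (real n * (sup_norm (\<lambda>t. f t - g t))\<^sup>2 / 4))
           \<le> (\<Prod>i\<in>{1..n}. 2 * sqrt (incr_var f n i * incr_var g n i) / (incr_var f n i + incr_var g n i))"
proof -
  define \<delta> where "\<delta> = sup_norm (\<lambda>t. f t - g t)"
  have \<delta>: "\<bar>f t - g t\<bar> \<le> \<delta>" "\<bar>g t - f t\<bar> \<le> \<delta>" if "t \<in> {0..1}" for t
    using abs_le_sup_norm[OF bounded_minus_comp[OF f(2) g(2)] that]
    by (simp_all add: \<delta>_def abs_minus_commute)
  have "exp (- (real n * \<delta>\<^sup>2 / 4)) = (\<Prod>i\<in>{1..n}. exp (- (\<delta>\<^sup>2 / 4)))"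
    by (simp add: exp_of_nat_mult[symmetric])
  also have "\<dots> \<le> (\<Prod>i\<in>{1..n}. 2 * sqrt (incr_var f n i * incr_var g n i) / (incr_var f n i + incr_var g n i))"
    using incr_var_pos[OF f] incr_var_pos[OF g]
      incr_var_le_exp_mult[OF f(1) g(1) f(2) g(2) _ \<delta>(1)] incr_var_le_exp_mult[OF g(1) f(1) g(2) f(2) _ \<delta>(2)]
    by (intro prod_mono conjI two_sqrt_mult_div_add_ge_exp) simp_all
  finally show ?thesis
    by (simp add: \<delta>_def)
qed

lemma tv_norm_obs_law_le:
  fixes f g :: "real \<Rightarrow> real"
  assumes f: "f \<in> borel_measurable borel" "bounded (f ` {0..1})"
    and g: "g \<in> borel_measurable borel" "bounded (g ` {0..1})"
  shows "tv_norm (obs_law f S0 n) (obs_law g S0 n)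
           \<le> 2 * sqrt (1 - exp (- (real n * (sup_norm (\<lambda>t. f t - g t))\<^sup>2 / 4)))"
proof -
  \<comment> \<open>Indices outside {1..n} do not enter the laws; the value 1 only keeps every Gaussian proper.\<close>
  define v w where "v i = (if i \<in> {1..n} then incr_var f n i else 1)"
    and "w i = (if i \<in> {1..n} then incr_var g n i else 1)" for i
  have v: "0 < v i" and w: "0 < w i" for i
    using incr_var_pos[OF f] incr_var_pos[OF g] by (simp_all add: v_def w_def)
  have "obs_law f S0 n = distr (PiM {1..n} (\<lambda>i. density lborel (normal_density 0 (sqrt (v i)))))
          (PiM {0..n} (\<lambda>_. borel)) (\<lambda>x. \<lambda>i\<in>{0..n}. S0 + (\<Sum>j\<in>{1..i}. x j))"
    "obs_law g S0 n = distr (PiM {1..n} (\<lambda>i. density lborel (normal_density 0 (sqrt (w i)))))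
          (PiM {0..n} (\<lambda>_. borel)) (\<lambda>x. \<lambda>i\<in>{0..n}. S0 + (\<Sum>j\<in>{1..i}. x j))"
    by (intro obs_law_eq_distr_PiM; simp add: v_def w_def)+
  then have "tv_norm (obs_law f S0 n) (obs_law g S0 n)
      \<le> 2 * sqrt (1 - (\<Prod>i\<in>{1..n}. 2 * sqrt (v i * w i) / (v i + w i)))"
    using tv_norm_distr_PiM_normal_le[OF _ v w measurable_partial_sums] by simp
  also have "(\<Prod>i\<in>{1..n}. 2 * sqrt (v i * w i) / (v i + w i))
      = (\<Prod>i\<in>{1..n}. 2 * sqrt (incr_var f n i * incr_var g n i) / (incr_var f n i + incr_var g n i))"
    by (simp add: v_def w_def)
  also have "2 * sqrt (1 - \<dots>) \<le> 2 * sqrt (1 - exp (- (real n * (sup_norm (\<lambda>t. f t - g t))\<^sup>2 / 4)))"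
    using exp_le_prod_incr_var_affinity[OF f g, of n] by simp
  finally show ?thesis .
qed

lemma
  fixes f g :: "real \<Rightarrow> real"
  assumes "f \<in> borel_measurable borel" "bounded (f ` {0..1})"
    and "g \<in> borel_measurable borel" "bounded (g ` {0..1})"
  shows tv_norm_obs_law_le_sqrt: "tv_norm (obs_law f S0 n) (obs_law g S0 n)
           \<le> sqrt (real n) * sup_norm (\<lambda>t. f t - g t)"
    and one_minus_half_tv_norm_obs_law_ge: "exp (- (real n * (sup_norm (\<lambda>t. f t - g t))\<^sup>2 / 4)) / 2
           \<le> 1 - tv_norm (obs_law f S0 n) (obs_law g S0 n) / 2"
proof -
  define x where "x = real n * (sup_norm (\<lambda>t. f t - g t))\<^sup>2 / 4"
  have tv: "tv_norm (obs_law f S0 n) (obs_law g S0 n) \<le> 2 * sqrt (1 - exp (- x))"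
    unfolding x_def by (rule tv_norm_obs_law_le[OF assms])
  have "0 \<le> sup_norm (\<lambda>t. f t - g t)"
    using sup_norm_nonneg[OF bounded_minus_comp[OF assms(2,4)]] .
  have "sqrt (1 - exp (- x)) \<le> sqrt x"
    using exp_ge_add_one_self[of "- x"] by simp
  also have "2 * sqrt x = sqrt (real n) * sup_norm (\<lambda>t. f t - g t)"
    using \<open>0 \<le> sup_norm (\<lambda>t. f t - g t)\<close> by (simp add: x_def real_sqrt_mult real_sqrt_divide)
  finally show "tv_norm (obs_law f S0 n) (obs_law g S0 n) \<le> sqrt (real n) * sup_norm (\<lambda>t. f t - g t)"
    using tv by linarith
  have "0 \<le> x" by (simp add: x_def)
  then have "sqrt (1 - exp (- x)) \<le> 1 - exp (- x) / 2"
    by (intro sqrt_one_minus_le) simp_all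
  with tv show "exp (- x) / 2 \<le> 1 - tv_norm (obs_law f S0 n) (obs_law g S0 n) / 2"
    by linarith
qed

theorem proposition8:
  "\<exists>(c0::real) (R::real \<Rightarrow> real).
     c0 > 0 \<and> (\<forall>x\<ge>0. R x > 0) \<and> (\<forall>x y. 0 \<le> x \<and> x \<le> y \<longrightarrow> R y \<le> R x) \<and>
     (\<forall>(n::nat) (f::real \<Rightarrow> real) (g::real \<Rightarrow> real) (S0::real).
        n \<ge> 1 \<and> f \<in> borel_measurable borel \<and> g \<in> borel_measurable borel \<and>
        bounded (f ` {0..1}) \<and> bounded (g ` {0..1}) \<longrightarrow>
        tv_norm (obs_law f S0 n) (obs_law g S0 n)
          \<le> c0 * sqrt (real n) * exp (c0 * (sup_norm f + sup_norm g)) * sup_norm (\<lambda>t. f t - g t)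
        \<and> 1 - tv_norm (obs_law f S0 n) (obs_law g S0 n) / 2
          \<ge> R (real n * exp (3 * sup_norm f + 3 * sup_norm g) * (sup_norm (\<lambda>t. f t - g t))\<^sup>2))"
proof -
  define R :: "real \<Rightarrow> real" where "R x = exp (- x / 4) / 2" for x
  have "tv_norm (obs_law f S0 n) (obs_law g S0 n)
          \<le> 1 * sqrt (real n) * exp (1 * (sup_norm f + sup_norm g)) * sup_norm (\<lambda>t. f t - g t)
        \<and> R (real n * exp (3 * sup_norm f + 3 * sup_norm g) * (sup_norm (\<lambda>t. f t - g t))\<^sup>2)
          \<le> 1 - tv_norm (obs_law f S0 n) (obs_law g S0 n) / 2"
    if "f \<in> borel_measurable borel" "g \<in> borel_measurable borel"
      "bounded (f ` {0..1})" "bounded (g ` {0..1})" for n f g S0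
  proof -
    define \<delta> where "\<delta> = sup_norm (\<lambda>t. f t - g t)"
    have "0 \<le> sup_norm f" "0 \<le> sup_norm g" "0 \<le> \<delta>"
      unfolding \<delta>_def using that by (simp_all add: sup_norm_nonneg bounded_minus_comp)
    \<comment> \<open>the exponential weights in the statement are at least 1 and are simply dropped\<close>
    then have "sqrt (real n) * \<delta> \<le> 1 * sqrt (real n) * exp (1 * (sup_norm f + sup_norm g)) * \<delta>"
      and "R (real n * exp (3 * sup_norm f + 3 * sup_norm g) * \<delta>\<^sup>2) \<le> exp (- (real n * \<delta>\<^sup>2 / 4)) / 2"
      using mult_left_mono[of 1 "exp (sup_norm f + sup_norm g)" "sqrt (real n) * \<delta>"]
        mult_left_mono[of 1 "exp (3 * sup_norm f + 3 * sup_norm g)" "real n * \<delta>\<^sup>2"]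
      by (simp_all add: R_def mult_ac)
    then show ?thesis
      using tv_norm_obs_law_le_sqrt[OF that(1,3,2,4), of S0 n] one_minus_half_tv_norm_obs_law_ge[OF that(1,3,2,4), of n S0]
      unfolding \<delta>_def by linarith
  qed
  moreover have "\<forall>x\<ge>0. R x > 0" "\<forall>x y. 0 \<le> x \<and> x \<le> y \<longrightarrow> R y \<le> R x"
    by (simp_all add: R_def)
  ultimately show ?thesis
    by (intro exI[of _ 1] exI[of _ R]) auto
qed

end
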